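(* Let $\tau\in\mathscr C^r(\mathbb{S}^1,\mathbb{R})$ and $R>\|\tau'\|_\infty$. If $\widetilde R>0$ satisfies $\vartheta_R-\vartheta_\tau\ge\widetilde R$, then $\widetilde{\mathcal N}_{\widetilde R}(n)\le\mathcal N(\tau,R;n)$ for all $n\ge1$; if $\widetilde R>\vartheta_R+\vartheta_\tau$, then $\mathcal N(\tau,R;n)\le\widetilde{\mathcal N}_{\widetilde R}(n)$ for all $n\ge1$. Consequently, $\mathcal N(\tau)=1$ if and only if $\lim_{n\to\infty}n^{-1}\log\widetilde{\mathcal N}_{\widetilde R}(n)=0$ for every $\widetilde R>0$.
   Context: $\mathbb{S}^1=\mathbb{R}/\mathbb{Z}$, $\mathbb{T}^2=\mathbb{S}^1\times\mathbb{S}^1$, $r\ge2$. $E$ is a $\mathscr C^r$ expanding circle map of degree $\ell\ge2$, $1<\lambda\le E'\le\Lambda$, $0$ a fixed point. $f(x,s)=(E(x),s+\tau(x)\bmod1)$; $\vartheta_\tau=\|\tau'\|_\infty/(\lambda-1)$; for $R>0$, $\vartheta_R=R/(\lambda-1)$ and $\mathscr K_R=\{(\xi,\eta):|\eta|\le\vartheta_R|\xi|\}$; $\mathcal N(\tau,R;n)=\sup_{z\in\mathbb{T}^2}\sup_v\#\{\zeta\in f^{-n}(z):v\in Df^n(\zeta)\mathscr K_R\}$ (sup over unit vectors $v$), and $\mathcal N(\tau)=\lim_n\mathcal N(\tau,R;n)^{1/n}$ (exists, independent of $R>\|\tau'\|_\infty$). Symbolic coding: $\mathcal A=\{0,\dots,\ell-1\}$;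 the points of $E^{-1}(0)$ divide $\mathbb{S}^1$ into half-open intervals $\mathcal I(j)$ each mapped bijectively onto $\mathbb{S}^1$ by $E$; for $\alpha=(\alpha_n,\dots,\alpha_1)\in\mathcal A^n$, $\mathcal I(\alpha)=\bigcap_{i=0}^{n-1}E^{-i}(\mathcal I(\alpha_{n-i}))$, $x_\alpha$ the unique point of $\mathcal I(\alpha)$ with $E^n(x_\alpha)=x$, $[\alpha]_k=(\alpha_k,\dots,\alpha_1)$; for infinite sequences $\alpha=(\dots,\alpha_2,\alpha_1)\in\mathcal A^\infty$ the truncations $[\alpha]_k$ are defined likewise, and a finite word $\alpha\in\mathcal A^n$ is identified with any infinite sequence extending it where needed. $S(x;\alpha)=\sum_{k=1}^\infty\tau'(x_{[\alpha]_k})/(E^k)'(x_{[\alpha]_k})$. For $\widetilde R>0$, $\widetilde{\mathcal N}_{\widetilde R}(n)=\sup_{y\in\mathbb{S}^1,\eta\in\mathbb{R}}\#\{\alpha\in\mathcal A^n: |\eta-S(y;\alpha)|\le\widetilde R\,((E^n)'(y_\alpha))^{-1}\}$, where for $\alpha\in\mathcal A^n$ the value $S(y;\alpha)$ is understood as $S(y;\tilde\alpha)$ for an arbitrary fixed extension $\tilde\alpha\in\mathcal A^\infty$ of $\alpha$. *)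

theory Defs
  imports "HOL-Analysis.Analysis"
begin

text \<open>Circle S^1 = R/Z is represented by [0,1); functions on the circle by 1-periodic
  functions on R (lifts). The expanding map E is given by its lift.\<close>

definition Cr :: "nat \<Rightarrow> (real \<Rightarrow> real) \<Rightarrow> bool" where
  "Cr r g \<longleftrightarrow>
     (\<forall>k<r. \<forall>x. ((deriv ^^ k) g has_real_derivative (deriv ^^ Suc k) g x) (at x))
     \<and> continuous_on UNIV ((deriv ^^ r) g)"

definition circle :: "real set" where "circle = {0..<1}"

definition torus :: "(real \<times> real) set" where "torus = circle \<times> circle"

definition Ec :: "(real \<Rightarrow> real) \<Rightarrow> real \<Rightarrow> real" where
  "Ec E x = frac (E x)"

definition fT :: "(real \<Rightarrow> real) \<Rightarrow> (real \<Rightarrow> real) \<Rightarrow> real \<times> real \<Rightarrow> real \<times> real" where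
  "fT E \<tau> z = (frac (E (fst z)), frac (snd z + \<tau> (fst z)))"

definition Df :: "(real \<Rightarrow> real) \<Rightarrow> (real \<Rightarrow> real) \<Rightarrow> real \<times> real \<Rightarrow> real \<times> real \<Rightarrow> real \<times> real" where
  "Df E \<tau> z w = (deriv E (fst z) * fst w, deriv \<tau> (fst z) * fst w + snd w)"

primrec Dfn :: "(real \<Rightarrow> real) \<Rightarrow> (real \<Rightarrow> real) \<Rightarrow> nat \<Rightarrow> real \<times> real \<Rightarrow> real \<times> real \<Rightarrow> real \<times> real" where
  "Dfn E \<tau> 0 z w = w"
| "Dfn E \<tau> (Suc n) z w = Df E \<tau> ((fT E \<tau> ^^ n) z) (Dfn E \<tau> n z w)"

definition theta :: "real \<Rightarrow> real \<Rightarrow> real" where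
  "theta lam c = c / (lam - 1)"

definition supnorm_deriv :: "(real \<Rightarrow> real) \<Rightarrow> real" where
  "supnorm_deriv \<tau> = Sup (range (\<lambda>x. \<bar>deriv \<tau> x\<bar>))"

definition cone :: "real \<Rightarrow> real \<Rightarrow> (real \<times> real) set" where
  "cone lam R = {w. \<bar>snd w\<bar> \<le> theta lam R * \<bar>fst w\<bar>}"

definition Ncount :: "(real \<Rightarrow> real) \<Rightarrow> (real \<Rightarrow> real) \<Rightarrow> real \<Rightarrow> real \<Rightarrow> nat \<Rightarrow> nat" where
  "Ncount E \<tau> lam R n = Sup {card {\<zeta> \<in> torus. (fT E \<tau> ^^ n) \<zeta> = z \<and> v \<in> Dfn E \<tau> n \<zeta> ` cone lam R}
                            | z v. z \<in> torus \<and> norm v = 1}"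

definition Ntau :: "(real \<Rightarrow> real) \<Rightarrow> (real \<Rightarrow> real) \<Rightarrow> real \<Rightarrow> real \<Rightarrow> real" where
  "Ntau E \<tau> lam R = lim (\<lambda>n. real (Ncount E \<tau> lam R n) powr (1 / real n))"

text \<open>Symbolic coding. I(j) = [p_j, p_(j+1)) where p_j are the preimages of 0 in increasing order.\<close>
definition Iint :: "(real \<Rightarrow> real) \<Rightarrow> nat \<Rightarrow> real set" where
  "Iint E j = {inv E (E 0 + real j) ..< inv E (E 0 + real j + 1)}"

text \<open>I(alpha) for alpha = (alpha_n,...,alpha_1), alpha_i = alpha i\<close>
definition Icyl :: "(real \<Rightarrow> real) \<Rightarrow> (nat \<Rightarrow> nat) \<Rightarrow> nat \<Rightarrow> real set" where
  "Icyl E \<alpha> n = {y \<in> circle. \<forall>i<n. (Ec E ^^ i) y \<in> Iint E (\<alpha> (n - i))}"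

definition xpt :: "(real \<Rightarrow> real) \<Rightarrow> real \<Rightarrow> (nat \<Rightarrow> nat) \<Rightarrow> nat \<Rightarrow> real" where
  "xpt E x \<alpha> n = (THE y. y \<in> Icyl E \<alpha> n \<and> (Ec E ^^ n) y = x)"

definition Sfun :: "(real \<Rightarrow> real) \<Rightarrow> (real \<Rightarrow> real) \<Rightarrow> real \<Rightarrow> (nat \<Rightarrow> nat) \<Rightarrow> real" where
  "Sfun E \<tau> x \<alpha> = (\<Sum>k. deriv \<tau> (xpt E x \<alpha> (Suc k)) / deriv (E ^^ Suc k) (xpt E x \<alpha> (Suc k)))"

definition words :: "nat \<Rightarrow> nat \<Rightarrow> (nat \<Rightarrow> nat) set" where
  "words l n = PiE {1..n} (\<lambda>_. {..<l})"

definition seqs :: "nat \<Rightarrow> (nat \<Rightarrow> nat) set" where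
  "seqs l = {\<alpha>. \<forall>i\<ge>1. \<alpha> i < l}"

text \<open>a fixed choice of extensions of finite words to infinite sequences\<close>
definition valid_ext :: "nat \<Rightarrow> (nat \<Rightarrow> (nat \<Rightarrow> nat) \<Rightarrow> (nat \<Rightarrow> nat)) \<Rightarrow> bool" where
  "valid_ext l ext \<longleftrightarrow>
     (\<forall>n \<alpha>. \<alpha> \<in> words l n \<longrightarrow> ext n \<alpha> \<in> seqs l \<and> (\<forall>i\<in>{1..n}. ext n \<alpha> i = \<alpha> i))"

definition Ntilde :: "(real \<Rightarrow> real) \<Rightarrow> (real \<Rightarrow> real) \<Rightarrow> nat \<Rightarrow> (nat \<Rightarrow> (nat \<Rightarrow> nat) \<Rightarrow> (nat \<Rightarrow> nat))
                      \<Rightarrow> real \<Rightarrow> nat \<Rightarrow> nat" where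
  "Ntilde E \<tau> l ext Rt n = Sup {card {\<alpha> \<in> words l n.
        \<bar>\<eta> - Sfun E \<tau> y (ext n \<alpha>)\<bar> \<le> Rt / deriv (E ^^ n) (xpt E y \<alpha> n)} | y \<eta>. y \<in> circle}"

end

theory Submission
  imports Defs
begin

text \<open>
  Along a preimage \<zeta> = (x_\<alpha>, s) of z under f^n the differential is
  Df^n(\<xi>, \<eta>) = ((E^n)' \<xi>, \<eta> + T_n \<xi>), so a vector v lies in Df^n K_R exactly when its slope
  is within \<vartheta>_R / (E^n)'(x_\<alpha>) of T_n / (E^n)'(x_\<alpha>), the n-th partial sum of S(x; \<alpha>).
  The tail of S is a geometric series bounded by \<vartheta>_\<tau> / (E^n)'(x_\<alpha>), and preimages
  correspond bijectively to words, so both inequalities follow from the triangle inequality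
  for slopes.

  Since Df^m maps K_R into itself, N(\<tau>,R;n) is submultiplicative and N(\<tau>) is the
  exponential of its Fekete growth rate. Since Df^m maps K_R' into K_R once m is large, the
  counts for different windows are comparable up to a shift in n and a constant factor,
  which ties the vanishing of every growth rate of the symbolic counts to N(\<tau>) = 1.
\<close>

lemma Cr_has_real_derivative:
  assumes "Cr r g" and "1 \<le> r"
  shows "(g has_real_derivative deriv g x) (at x)"
  using assms unfolding Cr_def by force

lemma Cr_continuous_deriv:
  assumes "Cr r g" and "2 \<le> r"
  shows "continuous_on UNIV (deriv g)"
proof -
  have "(deriv g has_real_derivative (deriv ^^ 2) g x) (at x)" for x
  proof -
    have "((deriv ^^ 1) g has_real_derivative (deriv ^^ Suc 1) g x) (at x)"
      using assms unfolding Cr_def by (metis Suc_1 Suc_le_lessD)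
    then show ?thesis by (simp add: numeral_2_eq_2)
  qed
  then show ?thesis by (meson DERIV_isCont continuous_at_imp_continuous_on)
qed

lemma periodic_add_of_int:
  fixes g :: "real \<Rightarrow> 'a"
  assumes "\<And>x. g (x + 1) = g x"
  shows "g (x + of_int k) = g x"
proof -
  have nat: "g (y + real n) = g y" for y n
    by (induction n arbitrary: y) (auto simp: assms add.assoc[symmetric])
  show ?thesis
  proof (cases "k \<ge> 0")
    case True
    then obtain n where "k = int n" by (metis nonneg_eq_int)
    then show ?thesis using nat by simp
  next
    case False
    then obtain n where "k = - int n" by (intro that[of "nat (- k)"]) simp
    then show ?thesis using nat[of "x - real n" n] by simp
  qed
qed

lemma deriv_add_one_eq:
  fixes g :: "real \<Rightarrow> real"
  assumes "\<And>x. g (x + 1) = g x + c" and "\<And>x. (g has_real_derivative deriv g x) (at x)"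
  shows "deriv g (x + 1) = deriv g x"
proof -
  have "((\<lambda>x. g (x + 1)) has_real_derivative deriv g (x + 1) * 1) (at x)"
    by (rule DERIV_chain2[OF assms(2)]) (auto intro!: derivative_eq_intros)
  moreover have "((\<lambda>x. g x + c) has_real_derivative deriv g x + 0) (at x)"
    by (rule DERIV_add[OF assms(2)]) simp
  ultimately show ?thesis unfolding assms(1) using DERIV_unique by fastforce
qed

lemma deriv_frac_eq:
  fixes g :: "real \<Rightarrow> real"
  assumes "\<And>x. g (x + 1) = g x + c" and "\<And>x. (g has_real_derivative deriv g x) (at x)"
  shows "deriv g (frac x) = deriv g x"
  using periodic_add_of_int[of "deriv g" "frac x" "\<lfloor>x\<rfloor>"] deriv_add_one_eq[OF assms]
  by (simp add: frac_def)

lemma geometric_tail_sums: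
  fixes q :: real
  assumes "1 < q"
  shows "(\<lambda>k. A / q ^ Suc k) sums (A / (q - 1))"
proof -
  have "(\<lambda>k. (A / q) * (1 / q) ^ k) sums ((A / q) * (1 / (1 - 1 / q)))"
    by (rule sums_mult[OF geometric_sums]) (use assms in simp)
  moreover have "(A / q) * (1 / (1 - 1 / q)) = A / (q - 1)" using assms by (simp add: field_simps)
  moreover have "(\<lambda>k. (A / q) * (1 / q) ^ k) = (\<lambda>k. A / q ^ Suc k)"
    by (simp add: power_one_over)
  ultimately show ?thesis by metis
qed

lemma subadditive_le_multiple:
  fixes a :: "nat \<Rightarrow> real"
  assumes "\<And>m n. a (m + n) \<le> a m + a n"
  shows "a (q * k + r) \<le> real q * a k + a r"
proof (induction q)
  case (Suc q)
  have "a (Suc q * k + r) = a (k + (q * k + r))" by (simp add: algebra_simps)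
  also have "\<dots> \<le> a k + a (q * k + r)" by (rule assms)
  finally show ?case using Suc by (simp add: algebra_simps)
qed simp

lemma Fekete_subadditive:
  fixes a :: "nat \<Rightarrow> real"
  assumes nonneg: "\<And>n. 0 \<le> a n" and subadd: "\<And>m n. a (m + n) \<le> a m + a n"
  shows "(\<lambda>n. a n / real n) \<longlonglongrightarrow> Inf {a n / real n | n. n \<ge> 1}"
proof (rule LIMSEQ_I)
  define L where "L = Inf {a n / real n | n. n \<ge> 1}"
  have L_le: "L \<le> a n / real n" if "n \<ge> 1" for n
    unfolding L_def using that nonneg by (intro cInf_lower bdd_belowI[of _ 0]) auto
  fix \<epsilon> :: real assume \<epsilon>: "\<epsilon> > 0"
  obtain k where k: "k \<ge> 1" "a k / real k < L + \<epsilon> / 2"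
  proof -
    have "{a n / real n | n. n \<ge> 1} \<noteq> {}" by auto
    from cInf_lessD[OF this, of "L + \<epsilon> / 2"] \<epsilon> show ?thesis using that unfolding L_def by auto
  qed
  define C where "C = (\<Sum>r<k. a r)"
  have C: "a r \<le> C" if "r < k" for r
    unfolding C_def by (rule member_le_sum) (use that nonneg in auto)
  obtain N :: nat where N: "real N > 2 * C / \<epsilon>" using reals_Archimedean2 by blast
  have "norm (a n / real n - L) < \<epsilon>" if n: "n \<ge> max N 1" for n
  proof -
    have npos: "real n > 0" using n by simp
    define q where "q = n div k"
    have qk: "real q * real k \<le> real n"
      unfolding q_def by (metis div_times_less_eq_dividend of_nat_le_iff of_nat_mult)
    have "a n \<le> real q * a k + C"
      using subadditive_le_multiple[OF subadd, of q k "n mod k"] C[of "n mod k"] k(1)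
      by (simp add: q_def)
    then have "a n / real n \<le> (real q * real k / real n) * (a k / real k) + C / real n"
      using npos k(1) by (simp add: add_divide_distrib[symmetric] divide_right_mono)
    also have "\<dots> \<le> a k / real k + C / real n"
      using qk npos nonneg[of k] by (intro add_right_mono mult_left_le_one_le) auto
    also have "C / real n < \<epsilon> / 2"
      using N \<epsilon> npos n by (simp add: field_simps) (smt (verit) of_nat_le_iff mult_left_mono)
    finally have "a n / real n < L + \<epsilon>" using k(2) by linarith
    then show ?thesis using L_le[of n] n by simp
  qed
  then show "\<exists>no. \<forall>n\<ge>no. norm (a n / real n - Inf {a n / real n | n. n \<ge> 1}) < \<epsilon>"
    unfolding L_def by blast
qed

lemma ln_ratio_tendsto_0_if_le_shift:
  fixes b N :: "nat \<Rightarrow> real" and C :: real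
  assumes b_ge: "\<And>n. 1 \<le> b n" and N_ge: "\<And>n. 1 \<le> N n" and C_ge: "1 \<le> C"
    and le: "\<And>j. b (j + m) \<le> N j * C"
    and N_rate: "(\<lambda>n. ln (N n) / real n) \<longlonglongrightarrow> 0"
  shows "(\<lambda>n. ln (b n) / real n) \<longlonglongrightarrow> 0"
proof -
  have C_rate: "(\<lambda>j. ln C / (real m + real j)) \<longlonglongrightarrow> 0"
    by (intro real_tendsto_divide_at_top[OF tendsto_const]
        filterlim_tendsto_add_at_top[OF tendsto_const filterlim_real_sequentially])
  have "ln (b (j + m)) / real (j + m) \<le> ln (N j) / real j + ln C / (real m + real j)"
    if j: "j \<ge> 1" for j
  proof -
    have "ln (b (j + m)) \<le> ln (N j * C)"
      using le[of j] b_ge[of "j + m"] by simp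
    then have "ln (b (j + m)) \<le> ln (N j) + ln C"
      using N_ge[of j] C_ge by (simp add: ln_mult)
    then have "ln (b (j + m)) / real (j + m) \<le> ln (N j) / real (j + m) + ln C / (real m + real j)"
      by (simp add: add_divide_distrib[symmetric] divide_right_mono add.commute)
    also have "ln (N j) / real (j + m) \<le> ln (N j) / real j"
      using N_ge[of j] j by (intro divide_left_mono) auto
    finally show ?thesis by simp
  qed
  then have "(\<lambda>j. ln (b (j + m)) / real (j + m)) \<longlonglongrightarrow> 0"
  proof (intro tendsto_sandwich[OF _ _ tendsto_const tendsto_add_zero[OF N_rate C_rate]])
    show "\<forall>\<^sub>F j in sequentially. 0 \<le> ln (b (j + m)) / real (j + m)"
      using b_ge by (intro always_eventually allI divide_nonneg_nonneg) auto
  qed (rule eventually_sequentiallyI[of 1])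
  then show ?thesis by (rule LIMSEQ_offset)
qed

lemma abs_diff_div_le_iff:
  fixes a b t p c :: real
  assumes "0 < p" "a \<noteq> 0"
  shows "\<bar>b - t * (a / p)\<bar> \<le> c * \<bar>a / p\<bar> \<longleftrightarrow> \<bar>b / a - t / p\<bar> \<le> c / p"
proof -
  have "b - t * (a / p) = a * (b / a - t / p)" using assms by (simp add: field_simps)
  then have lhs: "\<bar>b - t * (a / p)\<bar> = \<bar>a\<bar> * \<bar>b / a - t / p\<bar>" by (simp only: abs_mult)
  have rhs: "c * \<bar>a / p\<bar> = \<bar>a\<bar> * (c / p)" using assms by (simp add: abs_div)
  show ?thesis unfolding lhs rhs by (rule mult_le_cancel_left_pos) (use assms(2) in simp)
qed

lemma sgn_Pair_one:
  fixes \<eta> :: real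
  shows "norm (sgn (1::real, \<eta>)) = 1" and "fst (sgn (1::real, \<eta>)) \<noteq> 0"
    and "snd (sgn (1::real, \<eta>)) / fst (sgn (1::real, \<eta>)) = \<eta>"
proof -
  have ne: "(1::real, \<eta>) \<noteq> 0" by (simp add: zero_prod_def)
  then show "norm (sgn (1::real, \<eta>)) = 1" by (simp add: norm_sgn)
  from ne have "norm (1::real, \<eta>) \<noteq> 0" by simp
  then show "fst (sgn (1::real, \<eta>)) \<noteq> 0" "snd (sgn (1::real, \<eta>)) / fst (sgn (1::real, \<eta>)) = \<eta>"
    by (simp_all add: sgn_div_norm)
qed

section \<open>Circle map, skew product and cones\<close>

lemma Ec_in_circle: "Ec E x \<in> circle"
  by (simp add: Ec_def circle_def frac_lt_1)

lemma funpow_Ec_in_circle: "y \<in> circle \<Longrightarrow> (Ec E ^^ i) y \<in> circle"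
  by (cases i) (auto simp: Ec_in_circle)

lemma funpow_Ec_add: "(Ec E ^^ (a + b)) y = (Ec E ^^ b) ((Ec E ^^ a) y)"
  by (simp add: funpow_add add.commute[of a b])

lemma torus_iff: "z \<in> torus \<longleftrightarrow> fst z \<in> circle \<and> snd z \<in> circle"
  by (cases z) (simp add: torus_def)

lemma fst_funpow_fT: "fst ((fT E \<tau> ^^ n) z) = (Ec E ^^ n) (fst z)"
  by (induction n) (auto simp: fT_def Ec_def)

lemma funpow_fT_in_torus: "z \<in> torus \<Longrightarrow> (fT E \<tau> ^^ m) z \<in> torus"
  by (induction m) (auto simp: fT_def torus_def circle_def frac_lt_1)

lemma Dfn_add: "Dfn E \<tau> (n + m) \<zeta> w = Dfn E \<tau> n ((fT E \<tau> ^^ m) \<zeta>) (Dfn E \<tau> m \<zeta> w)"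
  by (induction n) (simp_all add: funpow_add)

lemma Icyl_subset_circle: "Icyl E \<alpha> n \<subseteq> circle"
  by (auto simp: Icyl_def)

lemma mem_Icyl_Suc:
  "y \<in> Icyl E \<alpha> (Suc n) \<longleftrightarrow> y \<in> circle \<and> y \<in> Iint E (\<alpha> (Suc n)) \<and> Ec E y \<in> Icyl E \<alpha> n"
proof -
  have "(\<forall>i<Suc n. (Ec E ^^ i) y \<in> Iint E (\<alpha> (Suc n - i))) \<longleftrightarrow>
        y \<in> Iint E (\<alpha> (Suc n)) \<and> (\<forall>i<n. (Ec E ^^ i) (Ec E y) \<in> Iint E (\<alpha> (n - i)))"
    unfolding All_less_Suc2 by (simp add: funpow_Suc_right del: funpow.simps)
  then show ?thesis using Ec_in_circle unfolding Icyl_def by auto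
qed

lemma xpt_cong: "(\<And>i. i \<in> {1..n} \<Longrightarrow> \<alpha> i = \<beta> i) \<Longrightarrow> xpt E x \<alpha> n = xpt E x \<beta> n"
proof -
  assume "\<And>i. i \<in> {1..n} \<Longrightarrow> \<alpha> i = \<beta> i"
  then have "Icyl E \<alpha> n = Icyl E \<beta> n" unfolding Icyl_def by (auto simp: Suc_le_eq)
  then show ?thesis by (simp add: xpt_def)
qed

lemma finite_words: "finite (words l n)"
  by (simp add: words_def finite_PiE)

definition sector :: "real \<Rightarrow> (real \<times> real) set" where
  "sector c = {w. \<bar>snd w\<bar> \<le> c * \<bar>fst w\<bar>}"

lemma cone_eq_sector: "cone lam R = sector (theta lam R)"
  by (simp add: cone_def sector_def)

lemma sector_mono: "c \<le> c' \<Longrightarrow> sector c \<subseteq> sector c'"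
  by (auto simp: sector_def intro: order_trans[OF _ mult_right_mono[OF _ abs_ge_zero]])

lemma scaleR_mem_cone: "w \<in> cone lam R \<Longrightarrow> c *\<^sub>R w \<in> cone lam R"
  by (auto simp: cone_def abs_mult mult.left_commute intro: mult_left_mono)

section \<open>The expanding lift\<close>

locale skew_product =
  fixes E \<tau> :: "real \<Rightarrow> real" and l :: nat and lam :: real
  assumes l_pos: "0 < l"
    and E_deriv: "\<And>x. (E has_real_derivative deriv E x) (at x)"
    and tau_deriv: "\<And>x. (\<tau> has_real_derivative deriv \<tau> x) (at x)"
    and continuous_deriv_tau: "continuous_on UNIV (deriv \<tau>)"
    and E_add_one: "\<And>x. E (x + 1) = E x + real l"
    and lam_gt_1: "1 < lam" and lam_le_deriv_E: "\<And>x. lam \<le> deriv E x"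
    and E_0_Ints: "E 0 \<in> \<int>"
    and tau_periodic: "\<And>x. \<tau> (x + 1) = \<tau> x"
begin

abbreviation M :: real where "M \<equiv> supnorm_deriv \<tau>"

lemma lam_pos: "0 < lam"
  using lam_gt_1 by simp

lemma deriv_E_pos: "0 < deriv E x"
  using lam_le_deriv_E[of x] lam_gt_1 by linarith

lemma strict_mono_E: "strict_mono E"
proof (rule strict_monoI)
  fix x y :: real assume "x < y"
  then show "E x < E y"
    by (rule DERIV_pos_imp_increasing) (use E_deriv deriv_E_pos in blast)
qed

lemma E_add_of_int: "E (x + of_int k) = E x + real l * of_int k"
  using periodic_add_of_int[of "\<lambda>x. E x - real l * x" x k] by (simp add: E_add_one algebra_simps)

lemma deriv_E_frac: "deriv E (frac x) = deriv E x"
  by (rule deriv_frac_eq[OF E_add_one E_deriv])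

lemma deriv_tau_frac: "deriv \<tau> (frac x) = deriv \<tau> x"
  by (rule deriv_frac_eq[of \<tau> 0]) (simp_all add: tau_periodic tau_deriv)

lemma abs_deriv_tau_le: "\<bar>deriv \<tau> x\<bar> \<le> M"
proof -
  have "bounded (deriv \<tau> ` {0..1})"
    by (intro compact_imp_bounded compact_continuous_image continuous_on_subset[OF continuous_deriv_tau]) auto
  then obtain B where B: "\<And>y. y \<in> {0..1} \<Longrightarrow> \<bar>deriv \<tau> y\<bar> \<le> B"
    unfolding bounded_iff real_norm_def by blast
  have "\<bar>deriv \<tau> y\<bar> \<le> B" for y
    using B[of "frac y"] frac_lt_1[of y] by (simp add: deriv_tau_frac less_imp_le)
  then show ?thesis
    unfolding supnorm_deriv_def by (intro cSup_upper bdd_aboveI[of _ B]) auto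
qed

lemma M_nonneg: "0 \<le> M"
  using abs_deriv_tau_le[of 0] by linarith

lemma theta_nonneg: "0 \<le> c \<Longrightarrow> 0 \<le> theta lam c"
  using lam_gt_1 by (simp add: theta_def)

lemma theta_diff: "theta lam R - theta lam M = (R - M) / (lam - 1)"
  by (simp add: theta_def diff_divide_distrib)

lemma Ec_frac: "Ec E (frac x) = Ec E x"
proof -
  have "real l * of_int \<lfloor>x\<rfloor> \<in> \<int>" by simp
  then show ?thesis
    using E_add_of_int[of "frac x" "\<lfloor>x\<rfloor>"] by (simp add: Ec_def frac_def frac_add_int_right)
qed

lemma funpow_Ec_Suc: "(Ec E ^^ Suc i) y = frac ((E ^^ Suc i) y)"
  by (induction i) (simp_all add: Ec_def Ec_frac[unfolded Ec_def])

lemma deriv_E_funpow_Ec: "deriv E ((Ec E ^^ i) y) = deriv E ((E ^^ i) y)"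
  by (cases i) (simp, simp only: funpow_Ec_Suc deriv_E_frac)

definition dEn :: "nat \<Rightarrow> real \<Rightarrow> real" where
  "dEn n y = (\<Prod>i<n. deriv E ((Ec E ^^ i) y))"

lemma funpow_E_has_derivative: "((E ^^ n) has_real_derivative dEn n y) (at y)"
proof (induction n)
  case 0 then show ?case by (simp add: dEn_def DERIV_ident[unfolded id_def] id_def)
next
  case (Suc n)
  have "((\<lambda>x. E ((E ^^ n) x)) has_real_derivative deriv E ((E ^^ n) y) * dEn n y) (at y)"
    by (rule DERIV_chain2[OF E_deriv Suc])
  then show ?case by (simp add: dEn_def deriv_E_funpow_Ec o_def mult.commute)
qed

lemma deriv_funpow_E: "deriv (E ^^ n) y = dEn n y"
  using funpow_E_has_derivative by (rule DERIV_imp_deriv)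

lemma lam_power_le_dEn: "lam ^ n \<le> dEn n y"
  unfolding dEn_def using prod_mono[of "{..<n}" "\<lambda>_. lam"] lam_le_deriv_E lam_pos
  by (simp add: less_imp_le)

lemma dEn_pos: "0 < dEn n y"
  using lam_power_le_dEn[of n y] lam_pos by (meson less_le_trans zero_less_power)

lemma dEn_0 [simp]: "dEn 0 y = 1"
  by (simp add: dEn_def)

lemma dEn_Suc: "dEn (Suc n) y = dEn n y * deriv E ((Ec E ^^ n) y)"
  by (simp add: dEn_def)

lemma dEn_add: "dEn (a + b) y = dEn a y * dEn b ((Ec E ^^ a) y)"
  by (induction b) (simp_all add: dEn_Suc funpow_Ec_add)

section \<open>Symbolic coding\<close>

lemma E_mono_iff: "E x \<le> E y \<longleftrightarrow> x \<le> y" and E_strict_mono_iff: "E x < E y \<longleftrightarrow> x < y"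
  using strict_mono_less_eq[OF strict_mono_E] strict_mono_less[OF strict_mono_E] by auto

lemma inj_E: "inj E"
  by (rule strict_mono_imp_inj_on[OF strict_mono_E])

lemma E_IVT:
  assumes "E 0 \<le> c" "c \<le> E 0 + real l"
  obtains y where "0 \<le> y" "y \<le> 1" "E y = c"
  using IVT'[of E 0 c 1] assms E_add_one[of 0]
    continuous_on_subset[OF continuous_at_imp_continuous_on] E_deriv DERIV_isCont
  by (metis add_0 order_refl top_greatest zero_le_one)

lemma mem_Iint_iff:
  assumes "j < l"
  shows "y \<in> Iint E j \<longleftrightarrow> E 0 + real j \<le> E y \<and> E y < E 0 + real j + 1"
proof -
  obtain a where a: "E a = E 0 + real j" using E_IVT[of "E 0 + real j"] assms by auto
  obtain b where b: "E b = E 0 + real j + 1" using E_IVT[of "E 0 + real j + 1"] assms by auto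
  have "Iint E j = {a..<b}"
    unfolding Iint_def using a b inv_f_f[OF inj_E] by metis
  then show ?thesis using a b E_mono_iff[of a y] E_strict_mono_iff[of y b] by auto
qed

lemma Iint_subset_circle: "j < l \<Longrightarrow> Iint E j \<subseteq> circle"
  using mem_Iint_iff E_add_one[of 0] E_mono_iff[of 0] E_strict_mono_iff[of _ 1]
  by (fastforce simp: circle_def)

lemma Ec_on_Iint: assumes "j < l" "y \<in> Iint E j" shows "Ec E y = E y - E 0 - real j"
proof -
  have "E y - (E y - E 0 - real j) \<in> \<int>" using E_0_Ints by simp
  then show ?thesis unfolding Ec_def frac_unique_iff using assms mem_Iint_iff[of j y] by auto
qed

lemma Ec_inj_on_Iint: "j < l \<Longrightarrow> inj_on (Ec E) (Iint E j)"
  using Ec_on_Iint by (intro inj_onI) (simp add: inj_eq[OF inj_E])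

lemma Ec_image_Iint: assumes "j < l" "x \<in> circle" shows "\<exists>y \<in> Iint E j. Ec E y = x"
proof -
  have x: "0 \<le> x" "x < 1" using assms by (auto simp: circle_def)
  obtain y where y: "E y = E 0 + real j + x"
    using E_IVT[of "E 0 + real j + x"] x assms by auto
  then have "y \<in> Iint E j" using mem_Iint_iff[OF assms(1)] x by auto
  then show ?thesis using Ec_on_Iint[OF assms(1)] y by force
qed

definition digit :: "real \<Rightarrow> nat" where
  "digit y = nat \<lfloor>E y - E 0\<rfloor>"

lemma digit_eq: assumes "j < l" "y \<in> Iint E j" shows "digit y = j"
proof -
  have "\<lfloor>E y - E 0\<rfloor> = int j"
    by (rule floor_unique) (use assms mem_Iint_iff[of j y] in auto)
  then show ?thesis unfolding digit_def by simp
qed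

lemma digit_less: "y \<in> circle \<Longrightarrow> digit y < l"
  and mem_Iint_digit: "y \<in> circle \<Longrightarrow> y \<in> Iint E (digit y)"
proof -
  assume "y \<in> circle"
  then have e: "E 0 \<le> E y" "E y < E 0 + real l"
    using E_mono_iff[of 0 y] E_strict_mono_iff[of y 1] E_add_one[of 0] by (auto simp: circle_def)
  then have k: "real (digit y) \<le> E y - E 0" "E y - E 0 < real (digit y) + 1"
    unfolding digit_def by linarith+
  then show "digit y < l" using e by linarith
  then show "y \<in> Iint E (digit y)" using mem_Iint_iff k by auto
qed

definition admissible :: "(nat \<Rightarrow> nat) \<Rightarrow> nat \<Rightarrow> bool" where
  "admissible \<alpha> n \<longleftrightarrow> (\<forall>i\<in>{1..n}. \<alpha> i < l)"

lemma words_admissible: "\<alpha> \<in> words l n \<Longrightarrow> admissible \<alpha> n"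
  by (auto simp: words_def admissible_def)

lemma seqs_admissible: "\<alpha> \<in> seqs l \<Longrightarrow> admissible \<alpha> n"
  by (auto simp: seqs_def admissible_def)

lemma ex1_Icyl_preimage:
  "admissible \<alpha> n \<Longrightarrow> x \<in> circle \<Longrightarrow> \<exists>!y. y \<in> Icyl E \<alpha> n \<and> (Ec E ^^ n) y = x"
proof (induction n arbitrary: x)
  case 0 then show ?case by (auto simp: Icyl_def)
next
  case (Suc n)
  have adm: "admissible \<alpha> n" "\<alpha> (Suc n) < l" using Suc.prems by (auto simp: admissible_def)
  obtain u where u: "u \<in> Icyl E \<alpha> n" "(Ec E ^^ n) u = x"
    and u_unique: "\<And>u'. u' \<in> Icyl E \<alpha> n \<Longrightarrow> (Ec E ^^ n) u' = x \<Longrightarrow> u' = u"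
    using Suc.IH[OF adm(1) Suc.prems(2)] by blast
  obtain y where y: "y \<in> Iint E (\<alpha> (Suc n))" "Ec E y = u"
    using Ec_image_Iint[OF adm(2)] u(1) Icyl_subset_circle by blast
  show ?case
  proof (rule ex1I[of _ y])
    show "y \<in> Icyl E \<alpha> (Suc n) \<and> (Ec E ^^ Suc n) y = x"
      using y u Iint_subset_circle[OF adm(2)]
      by (auto simp: mem_Icyl_Suc funpow_Suc_right simp del: funpow.simps)
  next
    fix y' assume y': "y' \<in> Icyl E \<alpha> (Suc n) \<and> (Ec E ^^ Suc n) y' = x"
    then have "Ec E y' = Ec E y" using u_unique y(2)
      by (simp add: mem_Icyl_Suc funpow_Suc_right del: funpow.simps)
    then show "y' = y" using inj_onD[OF Ec_inj_on_Iint[OF adm(2)]] y y' by (auto simp: mem_Icyl_Suc)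
  qed
qed

lemma xpt_in_Icyl: "admissible \<alpha> n \<Longrightarrow> x \<in> circle \<Longrightarrow> xpt E x \<alpha> n \<in> Icyl E \<alpha> n"
  and funpow_Ec_xpt: "admissible \<alpha> n \<Longrightarrow> x \<in> circle \<Longrightarrow> (Ec E ^^ n) (xpt E x \<alpha> n) = x"
  using theI'[OF ex1_Icyl_preimage] unfolding xpt_def by auto

lemma xpt_unique:
  assumes "admissible \<alpha> n" "y \<in> Icyl E \<alpha> n" "(Ec E ^^ n) y = x"
  shows "xpt E x \<alpha> n = y"
proof -
  have "x \<in> circle" using assms funpow_Ec_in_circle Icyl_subset_circle by blast
  then show ?thesis
    unfolding xpt_def using the1_equality[OF ex1_Icyl_preimage[OF assms(1)]] assms by blast
qed

lemma xpt_0: "x \<in> circle \<Longrightarrow> xpt E x \<alpha> 0 = x"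
  by (rule xpt_unique) (auto simp: admissible_def Icyl_def)

lemma funpow_Ec_xpt_add:
  assumes "admissible \<alpha> (n + k)" "x \<in> circle"
  shows "(Ec E ^^ k) (xpt E x \<alpha> (n + k)) = xpt E x \<alpha> n"
proof (rule xpt_unique[symmetric])
  show "admissible \<alpha> n" using assms(1) by (auto simp: admissible_def)
  have "xpt E x \<alpha> (n + k) \<in> Icyl E \<alpha> (n + k)" by (rule xpt_in_Icyl[OF assms])
  then show "(Ec E ^^ k) (xpt E x \<alpha> (n + k)) \<in> Icyl E \<alpha> n"
    unfolding Icyl_def using funpow_Ec_in_circle
    by (auto simp: funpow_Ec_add[symmetric] add.commute dest!: spec[of _ "_ + k"])
  show "(Ec E ^^ n) ((Ec E ^^ k) (xpt E x \<alpha> (n + k))) = x"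
    using funpow_Ec_xpt[OF assms] by (simp add: funpow_Ec_add[symmetric] add.commute)
qed

definition itinerary :: "nat \<Rightarrow> real \<Rightarrow> (nat \<Rightarrow> nat)" where
  "itinerary n y = (\<lambda>i. if i \<in> {1..n} then digit ((Ec E ^^ (n - i)) y) else undefined)"

lemma itinerary_in_words: "y \<in> circle \<Longrightarrow> itinerary n y \<in> words l n"
  unfolding words_def itinerary_def using digit_less funpow_Ec_in_circle
  by (auto simp: PiE_def extensional_def)

lemma mem_Icyl_itinerary: assumes "y \<in> circle" shows "y \<in> Icyl E (itinerary n y) n"
  unfolding Icyl_def
proof (intro CollectI conjI allI impI assms)
  fix i assume "i < n"
  then have "n - i \<in> {1..n}" "n - (n - i) = i" by auto
  then have "itinerary n y (n - i) = digit ((Ec E ^^ i) y)" unfolding itinerary_def by simp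
  then show "(Ec E ^^ i) y \<in> Iint E (itinerary n y (n - i))"
    using mem_Iint_digit[OF funpow_Ec_in_circle[OF assms]] by simp
qed

lemma itinerary_eq: assumes "\<alpha> \<in> words l n" "y \<in> Icyl E \<alpha> n" shows "itinerary n y = \<alpha>"
proof
  fix i show "itinerary n y i = \<alpha> i"
  proof (cases "i \<in> {1..n}")
    case True
    then have "(Ec E ^^ (n - i)) y \<in> Iint E (\<alpha> (n - (n - i)))"
      using assms(2) unfolding Icyl_def by (metis (no_types, lifting) diff_less mem_Collect_eq
          atLeastAtMost_iff less_le_trans zero_less_one)
    moreover have "\<alpha> i < l" using True assms(1) by (auto simp: words_def)
    ultimately show ?thesis using digit_eq True by (simp add: itinerary_def)
  next
    case False then show ?thesis
      using assms(1) by (auto simp: words_def itinerary_def PiE_def extensional_def)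
  qed
qed

section \<open>The series S\<close>

definition T_sum :: "nat \<Rightarrow> real \<Rightarrow> real" where
  "T_sum n y = (\<Sum>k<n. deriv \<tau> ((Ec E ^^ k) y) * dEn k y)"

definition S_partial :: "nat \<Rightarrow> real \<Rightarrow> real" where
  "S_partial n y = T_sum n y / dEn n y"

lemma abs_Sfun_term_le:
  assumes \<alpha>: "\<alpha> \<in> seqs l" and x: "x \<in> circle"
  shows "\<bar>deriv \<tau> (xpt E x \<alpha> (n + Suc k)) / deriv (E ^^ (n + Suc k)) (xpt E x \<alpha> (n + Suc k))\<bar>
         \<le> M / dEn n (xpt E x \<alpha> n) / lam ^ Suc k"
proof -
  define z where "z = xpt E x \<alpha> (n + Suc k)"
  have "deriv (E ^^ (n + Suc k)) z = dEn (Suc k + n) z" by (simp only: deriv_funpow_E add.commute)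
  also have "\<dots> = dEn (Suc k) z * dEn n ((Ec E ^^ Suc k) z)" by (rule dEn_add)
  also have "(Ec E ^^ Suc k) z = xpt E x \<alpha> n"
    unfolding z_def by (rule funpow_Ec_xpt_add[OF seqs_admissible[OF \<alpha>] x])
  finally have "deriv (E ^^ (n + Suc k)) z = dEn (Suc k) z * dEn n (xpt E x \<alpha> n)" .
  moreover have "lam ^ Suc k * dEn n (xpt E x \<alpha> n) \<le> dEn (Suc k) z * dEn n (xpt E x \<alpha> n)"
    by (intro mult_right_mono lam_power_le_dEn less_imp_le[OF dEn_pos])
  ultimately have "\<bar>deriv \<tau> z / deriv (E ^^ (n + Suc k)) z\<bar> \<le> M / (lam ^ Suc k * dEn n (xpt E x \<alpha> n))"
    using frac_le[OF M_nonneg abs_deriv_tau_le[of z]] dEn_pos lam_pos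
    by (simp add: abs_mult abs_of_pos del: funpow.simps)
  then show ?thesis unfolding z_def by (simp add: mult.commute)
qed

lemma Sfun_head_sum:
  assumes \<alpha>: "admissible \<alpha> n" and x: "x \<in> circle"
  shows "(\<Sum>i<n. deriv \<tau> (xpt E x \<alpha> (Suc i)) / deriv (E ^^ Suc i) (xpt E x \<alpha> (Suc i)))
        = S_partial n (xpt E x \<alpha> n)"
proof -
  define z where "z = xpt E x \<alpha> n"
  have "deriv \<tau> (xpt E x \<alpha> (Suc i)) / deriv (E ^^ Suc i) (xpt E x \<alpha> (Suc i))
     = deriv \<tau> ((Ec E ^^ (n - Suc i)) z) * dEn (n - Suc i) z / dEn n z" if i: "i < n" for i
  proof -
    have "(Ec E ^^ (n - Suc i)) (xpt E x \<alpha> (Suc i + (n - Suc i))) = xpt E x \<alpha> (Suc i)"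
      by (rule funpow_Ec_xpt_add[OF _ x]) (use i \<alpha> in simp)
    then have "(Ec E ^^ (n - Suc i)) z = xpt E x \<alpha> (Suc i)" using i unfolding z_def by simp
    moreover have "dEn n z = dEn (n - Suc i) z * dEn (Suc i) ((Ec E ^^ (n - Suc i)) z)"
      using dEn_add[of "n - Suc i" "Suc i" z] i by simp
    ultimately show ?thesis
      unfolding deriv_funpow_E using dEn_pos[of "n - Suc i" z] by (simp add: field_simps)
  qed
  then have "(\<Sum>i<n. deriv \<tau> (xpt E x \<alpha> (Suc i)) / deriv (E ^^ Suc i) (xpt E x \<alpha> (Suc i)))
      = (\<Sum>i<n. deriv \<tau> ((Ec E ^^ (n - Suc i)) z) * dEn (n - Suc i) z / dEn n z)"
    by (intro sum.cong) auto
  also have "\<dots> = (\<Sum>i<n. deriv \<tau> ((Ec E ^^ i) z) * dEn i z / dEn n z)"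
    by (rule sum.nat_diff_reindex)
  finally show ?thesis unfolding z_def S_partial_def T_sum_def by (simp add: sum_divide_distrib)
qed

text \<open>Beyond the first n terms S is dominated by a geometric series with ratio 1/lam,
  whence the error \<vartheta>_M / (E^n)'.\<close>

lemma abs_Sfun_minus_S_partial_le:
  assumes \<alpha>: "\<alpha> \<in> seqs l" and x: "x \<in> circle"
  shows "\<bar>Sfun E \<tau> x \<alpha> - S_partial n (xpt E x \<alpha> n)\<bar> \<le> theta lam M / dEn n (xpt E x \<alpha> n)"
proof -
  define f where "f k = deriv \<tau> (xpt E x \<alpha> (Suc k)) / deriv (E ^^ Suc k) (xpt E x \<alpha> (Suc k))" for k
  define A where "A = M / dEn n (xpt E x \<alpha> n)"
  have tail_sums: "(\<lambda>k. A / lam ^ Suc k) sums (A / (lam - 1))" for A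
    by (rule geometric_tail_sums[OF lam_gt_1])
  have "norm (f k) \<le> M / lam ^ Suc k" for k
    using abs_Sfun_term_le[OF \<alpha> x, of 0 k] unfolding f_def by (simp add: xpt_0[OF x])
  then have f_summable: "summable f"
    by (rule summable_comparison_test'[OF sums_summable[OF tail_sums]])
  have tail_le: "norm \<bar>f (k + n)\<bar> \<le> A / lam ^ Suc k" for k
    using abs_Sfun_term_le[OF \<alpha> x, of n k] unfolding f_def A_def by (simp add: add.commute)
  have tail_summable: "summable (\<lambda>k. \<bar>f (k + n)\<bar>)"
    by (rule summable_comparison_test'[OF sums_summable[OF tail_sums] tail_le])
  have "\<bar>\<Sum>k. f (k + n)\<bar> \<le> (\<Sum>k. \<bar>f (k + n)\<bar>)" by (rule summable_rabs[OF tail_summable])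
  also have "\<dots> \<le> (\<Sum>k. A / lam ^ Suc k)"
    using tail_le by (intro suminf_le tail_summable sums_summable[OF tail_sums]) simp
  also have "\<dots> = A / (lam - 1)" by (rule sums_unique[OF tail_sums, symmetric])
  also have "\<dots> = theta lam M / dEn n (xpt E x \<alpha> n)" by (simp add: A_def theta_def)
  finally show ?thesis
    using suminf_split_initial_segment[OF f_summable, of n]
      Sfun_head_sum[OF seqs_admissible[OF \<alpha>] x]
    unfolding Sfun_def f_def by simp
qed

lemma abs_Sfun_ext_minus_S_partial_le:
  assumes "valid_ext l ext" "\<alpha> \<in> words l n" "x \<in> circle"
  shows "\<bar>Sfun E \<tau> x (ext n \<alpha>) - S_partial n (xpt E x \<alpha> n)\<bar> \<le> theta lam M / dEn n (xpt E x \<alpha> n)"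
proof -
  have "ext n \<alpha> \<in> seqs l" "xpt E x (ext n \<alpha>) n = xpt E x \<alpha> n"
    using assms(1,2) unfolding valid_ext_def by (auto intro: xpt_cong)
  then show ?thesis using abs_Sfun_minus_S_partial_le[OF _ assms(3)] by metis
qed

section \<open>Preimages and cone images\<close>

definition tau_sum :: "nat \<Rightarrow> real \<Rightarrow> real" where
  "tau_sum n y = (\<Sum>i<n. \<tau> ((Ec E ^^ i) y))"

lemma funpow_fT:
  assumes "snd z \<in> circle"
  shows "(fT E \<tau> ^^ n) z = ((Ec E ^^ n) (fst z), frac (snd z + tau_sum n (fst z)))"
proof (induction n)
  case 0 then show ?case using assms by (simp add: circle_def tau_sum_def)
next
  case (Suc n)
  have "(fT E \<tau> ^^ Suc n) z = fT E \<tau> ((fT E \<tau> ^^ n) z)" by simp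
  also have "\<dots> = ((Ec E ^^ Suc n) (fst z), frac (snd z + tau_sum (Suc n) (fst z)))"
    unfolding Suc by (simp add: fT_def Ec_def tau_sum_def add.assoc)
  finally show ?case .
qed

text \<open>The fibre coordinate of a preimage is forced by the Birkhoff sum of \<tau>, so the
  preimages of z under f^n correspond bijectively to the words of length n.\<close>

definition word_preimage :: "real \<times> real \<Rightarrow> nat \<Rightarrow> (nat \<Rightarrow> nat) \<Rightarrow> real \<times> real" where
  "word_preimage z n \<alpha> = (xpt E (fst z) \<alpha> n, frac (snd z - tau_sum n (xpt E (fst z) \<alpha> n)))"

lemma word_preimage_in_torus:
  "z \<in> torus \<Longrightarrow> \<alpha> \<in> words l n \<Longrightarrow> word_preimage z n \<alpha> \<in> torus"
proof -
  assume "z \<in> torus" "\<alpha> \<in> words l n"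
  then have "xpt E (fst z) \<alpha> n \<in> circle"
    using xpt_in_Icyl[OF words_admissible] Icyl_subset_circle torus_iff by blast
  then show ?thesis by (simp add: torus_iff word_preimage_def circle_def frac_lt_1)
qed

lemma funpow_fT_word_preimage:
  assumes "z \<in> torus" "\<alpha> \<in> words l n"
  shows "(fT E \<tau> ^^ n) (word_preimage z n \<alpha>) = z"
proof -
  have "snd (word_preimage z n \<alpha>) \<in> circle" by (simp add: word_preimage_def circle_def frac_lt_1)
  then show ?thesis
    using funpow_Ec_xpt[OF words_admissible[OF assms(2)]] assms(1)
    by (simp add: funpow_fT word_preimage_def torus_iff circle_def prod_eq_iff)
qed

lemma preimage_eq_word_preimage:
  assumes "\<zeta> \<in> torus" "(fT E \<tau> ^^ n) \<zeta> = z"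
  shows "\<zeta> = word_preimage z n (itinerary n (fst \<zeta>))"
proof -
  have c: "fst \<zeta> \<in> circle" "snd \<zeta> \<in> circle" using assms(1) torus_iff by auto
  have z: "z = ((Ec E ^^ n) (fst \<zeta>), frac (snd \<zeta> + tau_sum n (fst \<zeta>)))"
    using funpow_fT[OF c(2)] assms(2) by simp
  have "xpt E (fst z) (itinerary n (fst \<zeta>)) n = fst \<zeta>"
    using xpt_unique[OF words_admissible[OF itinerary_in_words[OF c(1)]] mem_Icyl_itinerary[OF c(1)]] z
    by simp
  moreover have "frac (snd z - tau_sum n (fst \<zeta>)) = snd \<zeta>"
    using z c(2) frac_add_simps(1)[of "snd \<zeta> + tau_sum n (fst \<zeta>)" "- tau_sum n (fst \<zeta>)"]
    by (simp add: circle_def)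
  ultimately show ?thesis by (simp add: word_preimage_def prod_eq_iff)
qed

lemma inj_on_word_preimage: "z \<in> torus \<Longrightarrow> inj_on (word_preimage z n) (words l n)"
proof (rule inj_onI)
  fix \<alpha> \<beta> assume z: "z \<in> torus" and w: "\<alpha> \<in> words l n" "\<beta> \<in> words l n"
    and "word_preimage z n \<alpha> = word_preimage z n \<beta>"
  then have "xpt E (fst z) \<alpha> n = xpt E (fst z) \<beta> n" by (simp add: word_preimage_def)
  moreover have "fst z \<in> circle" using z torus_iff by blast
  ultimately show "\<alpha> = \<beta>"
    using itinerary_eq[OF w(1) xpt_in_Icyl] itinerary_eq[OF w(2) xpt_in_Icyl] words_admissible w
    by metis
qed

lemma Dfn_eq: "Dfn E \<tau> n z w = (dEn n (fst z) * fst w, snd w + T_sum n (fst z) * fst w)"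
  by (induction n) (simp_all add: Df_def fst_funpow_fT dEn_Suc T_sum_def algebra_simps)

lemma Dfn_scaleR: "Dfn E \<tau> n \<zeta> (c *\<^sub>R w) = c *\<^sub>R Dfn E \<tau> n \<zeta> w"
  by (simp add: Dfn_eq algebra_simps)

lemma Dfn_inverse:
  "Dfn E \<tau> n \<zeta> (fst v / dEn n (fst \<zeta>), snd v - T_sum n (fst \<zeta>) * (fst v / dEn n (fst \<zeta>))) = v"
  using dEn_pos[of n "fst \<zeta>"] by (simp add: Dfn_eq prod_eq_iff)

lemma bij_Dfn: "bij (Dfn E \<tau> n \<zeta>)"
proof (rule bijI)
  show "inj (Dfn E \<tau> n \<zeta>)"
    using dEn_pos[of n "fst \<zeta>"] by (intro injI) (auto simp: Dfn_eq prod_eq_iff)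
  show "surj (Dfn E \<tau> n \<zeta>)" by (rule surjI, rule Dfn_inverse)
qed

lemma Dfn_image_cone_iff:
  assumes "v \<noteq> 0"
  shows "v \<in> Dfn E \<tau> n \<zeta> ` cone lam R \<longleftrightarrow>
     fst v \<noteq> 0 \<and> \<bar>snd v / fst v - S_partial n (fst \<zeta>)\<bar> \<le> theta lam R / dEn n (fst \<zeta>)"
proof -
  define p t where "p = dEn n (fst \<zeta>)" and "t = T_sum n (fst \<zeta>)"
  have p: "0 < p" unfolding p_def by (rule dEn_pos)
  have "v \<in> Dfn E \<tau> n \<zeta> ` cone lam R \<longleftrightarrow> (fst v / p, snd v - t * (fst v / p)) \<in> cone lam R"
    using Dfn_inverse[of n \<zeta> v] inj_eq[OF bij_is_inj[OF bij_Dfn]] unfolding p_def t_def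
    by (metis (no_types, lifting) image_iff)
  also have "\<dots> \<longleftrightarrow> \<bar>snd v - t * (fst v / p)\<bar> \<le> theta lam R * \<bar>fst v / p\<bar>"
    by (simp add: cone_def)
  also have "\<dots> \<longleftrightarrow> fst v \<noteq> 0 \<and> \<bar>snd v / fst v - t / p\<bar> \<le> theta lam R / p"
  proof (cases "fst v = 0")
    case True
    then have "snd v \<noteq> 0" using assms by (simp add: prod_eq_iff)
    then show ?thesis using True by simp
  qed (use abs_diff_div_le_iff[OF p] in simp)
  finally show ?thesis by (simp add: S_partial_def p_def t_def)
qed

definition cone_preimages :: "real \<Rightarrow> nat \<Rightarrow> real \<times> real \<Rightarrow> real \<times> real \<Rightarrow> (real \<times> real) set" where
  "cone_preimages R n z v = {\<zeta> \<in> torus. (fT E \<tau> ^^ n) \<zeta> = z \<and> v \<in> Dfn E \<tau> n \<zeta> ` cone lam R}"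

definition cone_words :: "real \<Rightarrow> nat \<Rightarrow> real \<Rightarrow> real \<times> real \<Rightarrow> (nat \<Rightarrow> nat) set" where
  "cone_words R n x v = {\<alpha> \<in> words l n. fst v \<noteq> 0 \<and>
     \<bar>snd v / fst v - S_partial n (xpt E x \<alpha> n)\<bar> \<le> theta lam R / dEn n (xpt E x \<alpha> n)}"

lemma finite_cone_words: "finite (cone_words R n x v)"
  by (rule finite_subset[OF _ finite_words]) (auto simp: cone_words_def)

lemma cone_preimages_eq_image:
  assumes z: "z \<in> torus" and v: "v \<noteq> 0"
  shows "cone_preimages R n z v = word_preimage z n ` cone_words R n (fst z) v"
proof (intro equalityI subsetI)
  fix \<zeta> assume "\<zeta> \<in> cone_preimages R n z v"
  then have \<zeta>: "\<zeta> \<in> torus" "(fT E \<tau> ^^ n) \<zeta> = z" "v \<in> Dfn E \<tau> n \<zeta> ` cone lam R"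
    by (auto simp: cone_preimages_def)
  define \<alpha> where "\<alpha> = itinerary n (fst \<zeta>)"
  have "\<alpha> \<in> words l n" using \<zeta>(1) torus_iff itinerary_in_words \<alpha>_def by blast
  moreover have "\<zeta> = word_preimage z n \<alpha>" using preimage_eq_word_preimage[OF \<zeta>(1,2)] \<alpha>_def by simp
  ultimately show "\<zeta> \<in> word_preimage z n ` cone_words R n (fst z) v"
    using \<zeta>(3) Dfn_image_cone_iff[OF v] by (force simp: cone_words_def word_preimage_def)
next
  fix \<zeta> assume "\<zeta> \<in> word_preimage z n ` cone_words R n (fst z) v"
  then show "\<zeta> \<in> cone_preimages R n z v"
    using word_preimage_in_torus[OF z] funpow_fT_word_preimage[OF z] Dfn_image_cone_iff[OF v]
    by (auto simp: cone_preimages_def cone_words_def word_preimage_def)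
qed

lemma card_cone_preimages:
  "z \<in> torus \<Longrightarrow> v \<noteq> 0 \<Longrightarrow> card (cone_preimages R n z v) = card (cone_words R n (fst z) v)"
  unfolding cone_preimages_eq_image
  by (rule card_image, rule inj_on_subset[OF inj_on_word_preimage]) (auto simp: cone_words_def)

lemma finite_cone_preimages: "z \<in> torus \<Longrightarrow> v \<noteq> 0 \<Longrightarrow> finite (cone_preimages R n z v)"
  by (simp add: cone_preimages_eq_image finite_cone_words)

lemma card_cone_preimages_le_Ncount:
  assumes "z \<in> torus" "norm v = 1"
  shows "card (cone_preimages R n z v) \<le> Ncount E \<tau> lam R n"
proof -
  have "card (cone_preimages R n z v) \<le> card (words l n)" if "z \<in> torus" "norm v = 1" for z v
  proof -
    have "card (cone_words R n (fst z) v) \<le> card (words l n)"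
      by (rule card_mono[OF finite_words]) (auto simp: cone_words_def)
    moreover have "v \<noteq> 0" using that by auto
    ultimately show ?thesis using that by (simp add: card_cone_preimages)
  qed
  then have "bdd_above {card (cone_preimages R n z v) | z v. z \<in> torus \<and> norm v = 1}"
    by (intro bdd_aboveI[of _ "card (words l n)"]) blast
  then show ?thesis
    unfolding Ncount_def cone_preimages_def[symmetric] using assms by (intro cSup_upper) blast+
qed

lemma Ncount_leI:
  assumes "\<And>z v. z \<in> torus \<Longrightarrow> norm v = 1 \<Longrightarrow> card (cone_preimages R n z v) \<le> K"
  shows "Ncount E \<tau> lam R n \<le> K"
  unfolding Ncount_def cone_preimages_def[symmetric]
proof (rule cSup_least)
  have "(0, 0) \<in> torus" "norm (1::real, 0::real) = 1" by (auto simp: torus_def circle_def)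
  then show "{card (cone_preimages R n z v) | z v. z \<in> torus \<and> norm v = 1} \<noteq> {}" by blast
qed (use assms in auto)

section \<open>Comparison of the two counts\<close>

definition near_words :: "real \<Rightarrow> nat \<Rightarrow> (nat \<Rightarrow> (nat \<Rightarrow> nat) \<Rightarrow> (nat \<Rightarrow> nat)) \<Rightarrow> real \<Rightarrow> real
    \<Rightarrow> (nat \<Rightarrow> nat) set" where
  "near_words Rt n ext y \<eta> = {\<alpha> \<in> words l n.
        \<bar>\<eta> - Sfun E \<tau> y (ext n \<alpha>)\<bar> \<le> Rt / deriv (E ^^ n) (xpt E y \<alpha> n)}"

lemma finite_near_words: "finite (near_words Rt n ext y \<eta>)"
  by (rule finite_subset[OF _ finite_words]) (auto simp: near_words_def)

lemma card_near_words_le_Ntilde: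
  "y \<in> circle \<Longrightarrow> card (near_words Rt n ext y \<eta>) \<le> Ntilde E \<tau> l ext Rt n"
  unfolding Ntilde_def near_words_def[symmetric]
  by (intro cSup_upper bdd_aboveI[of _ "card (words l n)"])
     (auto intro!: card_mono[OF finite_words] simp: near_words_def)

lemma Ntilde_leI:
  assumes "\<And>y \<eta>. y \<in> circle \<Longrightarrow> card (near_words Rt n ext y \<eta>) \<le> K"
  shows "Ntilde E \<tau> l ext Rt n \<le> K"
  unfolding Ntilde_def near_words_def[symmetric]
proof (rule cSup_least)
  have "(0::real) \<in> circle" by (simp add: circle_def)
  then show "{card (near_words Rt n ext y \<eta>) | y \<eta>. y \<in> circle} \<noteq> {}" by blast
qed (use assms in auto)

lemma near_words_subset_cone_words:
  assumes ext: "valid_ext l ext" and R: "Rt + theta lam M \<le> theta lam R"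
    and y: "y \<in> circle" and v: "fst v \<noteq> 0"
  shows "near_words Rt n ext y (snd v / fst v) \<subseteq> cone_words R n y v"
proof
  fix \<alpha> assume "\<alpha> \<in> near_words Rt n ext y (snd v / fst v)"
  then have \<alpha>: "\<alpha> \<in> words l n"
    and near: "\<bar>snd v / fst v - Sfun E \<tau> y (ext n \<alpha>)\<bar> \<le> Rt / dEn n (xpt E y \<alpha> n)"
    by (auto simp: near_words_def deriv_funpow_E)
  have d: "0 < dEn n (xpt E y \<alpha> n)" by (rule dEn_pos)
  have "\<bar>snd v / fst v - S_partial n (xpt E y \<alpha> n)\<bar> \<le> (Rt + theta lam M) / dEn n (xpt E y \<alpha> n)"
    using near abs_Sfun_ext_minus_S_partial_le[OF ext \<alpha> y] by (simp add: add_divide_distrib)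
  also have "\<dots> \<le> theta lam R / dEn n (xpt E y \<alpha> n)" using R d by (simp add: divide_right_mono)
  finally show "\<alpha> \<in> cone_words R n y v" using \<alpha> v by (simp add: cone_words_def)
qed

lemma cone_words_subset_near_words:
  assumes ext: "valid_ext l ext" and Rt: "theta lam R + theta lam M \<le> Rt" and y: "y \<in> circle"
  shows "cone_words R n y v \<subseteq> near_words Rt n ext y (snd v / fst v)"
proof
  fix \<alpha> assume "\<alpha> \<in> cone_words R n y v"
  then have \<alpha>: "\<alpha> \<in> words l n"
    and cone: "\<bar>snd v / fst v - S_partial n (xpt E y \<alpha> n)\<bar> \<le> theta lam R / dEn n (xpt E y \<alpha> n)"
    by (auto simp: cone_words_def)
  have d: "0 < dEn n (xpt E y \<alpha> n)" by (rule dEn_pos)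
  have "\<bar>snd v / fst v - Sfun E \<tau> y (ext n \<alpha>)\<bar> \<le> (theta lam R + theta lam M) / dEn n (xpt E y \<alpha> n)"
    using cone abs_Sfun_ext_minus_S_partial_le[OF ext \<alpha> y] by (simp add: add_divide_distrib)
  also have "\<dots> \<le> Rt / dEn n (xpt E y \<alpha> n)" using Rt d by (simp add: divide_right_mono)
  finally show "\<alpha> \<in> near_words Rt n ext y (snd v / fst v)"
    using \<alpha> by (simp add: near_words_def deriv_funpow_E)
qed

lemma Ntilde_le_Ncount:
  assumes "valid_ext l ext" and "Rt + theta lam M \<le> theta lam R"
  shows "Ntilde E \<tau> l ext Rt n \<le> Ncount E \<tau> lam R n"
proof (rule Ntilde_leI)
  fix y \<eta> :: real assume y: "y \<in> circle"
  define v where "v = sgn (1::real, \<eta>)"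
  have v: "norm v = 1" "fst v \<noteq> 0" "snd v / fst v = \<eta>"
    unfolding v_def by (rule sgn_Pair_one)+
  have z: "(y, 0) \<in> torus" using y by (simp add: torus_def circle_def)
  have "card (near_words Rt n ext y \<eta>) \<le> card (cone_words R n y v)"
    using near_words_subset_cone_words[OF assms y v(2)] v(3) by (intro card_mono finite_cone_words) auto
  also have "\<dots> = card (cone_preimages R n (y, 0) v)"
    using card_cone_preimages[OF z, of v] v(1) by fastforce
  also have "\<dots> \<le> Ncount E \<tau> lam R n" by (rule card_cone_preimages_le_Ncount[OF z v(1)])
  finally show "card (near_words Rt n ext y \<eta>) \<le> Ncount E \<tau> lam R n" .
qed

lemma Ncount_le_Ntilde:
  assumes "valid_ext l ext" and "theta lam R + theta lam M \<le> Rt"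
  shows "Ncount E \<tau> lam R n \<le> Ntilde E \<tau> l ext Rt n"
proof (rule Ncount_leI)
  fix z and v :: "real \<times> real" assume z: "z \<in> torus" and v: "norm v = 1"
  have x: "fst z \<in> circle" using z torus_iff by blast
  have "v \<noteq> 0" using v by auto
  then have "card (cone_preimages R n z v) = card (cone_words R n (fst z) v)"
    by (rule card_cone_preimages[OF z])
  also have "\<dots> \<le> card (near_words Rt n ext (fst z) (snd v / fst v))"
    using cone_words_subset_near_words[OF assms x]
    by (intro card_mono finite_near_words)
  also have "\<dots> \<le> Ntilde E \<tau> l ext Rt n" by (rule card_near_words_le_Ntilde[OF x])
  finally show "card (cone_preimages R n z v) \<le> Ntilde E \<tau> l ext Rt n" .
qed

section \<open>Submultiplicativity and growth rates\<close>

definition sector_step :: "real \<Rightarrow> real" where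
  "sector_step c = (M + c) / lam"

lemma Df_image_sector: "0 \<le> c \<Longrightarrow> Df E \<tau> z ` sector c \<subseteq> sector (sector_step c)"
proof
  fix u assume c: "0 \<le> c" and "u \<in> Df E \<tau> z ` sector c"
  then obtain w where w: "\<bar>snd w\<bar> \<le> c * \<bar>fst w\<bar>" and u: "u = Df E \<tau> z w"
    by (auto simp: sector_def)
  have "\<bar>snd u\<bar> \<le> \<bar>deriv \<tau> (fst z)\<bar> * \<bar>fst w\<bar> + \<bar>snd w\<bar>"
    unfolding u Df_def by (simp add: abs_mult[symmetric] abs_triangle_ineq)
  also have "\<dots> \<le> (M + c) * \<bar>fst w\<bar>"
    using mult_right_mono[OF abs_deriv_tau_le abs_ge_zero, of "fst z" "fst w"] w
    by (simp add: distrib_right)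
  also have "\<dots> = ((M + c) / lam) * (lam * \<bar>fst w\<bar>)" using lam_pos by simp
  also have "\<dots> \<le> ((M + c) / lam) * (deriv E (fst z) * \<bar>fst w\<bar>)"
    using M_nonneg c lam_pos lam_le_deriv_E by (intro mult_left_mono mult_right_mono) auto
  also have "\<dots> = sector_step c * \<bar>fst u\<bar>"
    unfolding u Df_def sector_step_def using deriv_E_pos[of "fst z"] by (simp add: abs_mult)
  finally show "u \<in> sector (sector_step c)" by (simp add: sector_def)
qed

lemma funpow_sector_step_nonneg: "0 \<le> c \<Longrightarrow> 0 \<le> (sector_step ^^ n) c"
  by (induction n) (auto simp: sector_step_def M_nonneg lam_pos intro!: divide_nonneg_pos)

lemma funpow_sector_step: "(sector_step ^^ n) c = theta lam M + (c - theta lam M) / lam ^ n"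
proof (induction n)
  case (Suc n)
  have "(sector_step ^^ Suc n) c = (M + (theta lam M + (c - theta lam M) / lam ^ n)) / lam"
    by (simp only: funpow.simps o_apply sector_step_def Suc)
  also have "\<dots> = theta lam M + (c - theta lam M) / lam ^ Suc n"
  proof -
    have key: "(M + (t + (c - t) / q)) / lam = t + (c - t) / (lam * q)"
      if "M = (lam - 1) * t" "0 < q" for t q
    proof -
      have "(M + (t + (c - t) / q)) / lam = (lam * t + (c - t) / q) / lam"
        using that(1) by (simp add: algebra_simps)
      also have "\<dots> = t + (c - t) / (lam * q)" using that(2) lam_pos by (simp add: field_simps)
      finally show ?thesis .
    qed
    have "M = (lam - 1) * theta lam M" using lam_gt_1 by (simp add: theta_def)
    from key[OF this zero_less_power[OF lam_pos, of n]] show ?thesis by (simp only: power_Suc)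
  qed
  finally show ?case .
qed simp

lemma Dfn_image_sector:
  assumes "0 \<le> c"
  shows "Dfn E \<tau> n \<zeta> ` sector c \<subseteq> sector ((sector_step ^^ n) c)"
proof (induction n)
  case (Suc n)
  have "Dfn E \<tau> (Suc n) \<zeta> ` sector c = Df E \<tau> ((fT E \<tau> ^^ n) \<zeta>) ` (Dfn E \<tau> n \<zeta> ` sector c)"
    by (auto simp: image_iff)
  also have "\<dots> \<subseteq> Df E \<tau> ((fT E \<tau> ^^ n) \<zeta>) ` sector ((sector_step ^^ n) c)"
    using Suc by (rule image_mono)
  also have "\<dots> \<subseteq> sector (sector_step ((sector_step ^^ n) c))"
    by (rule Df_image_sector[OF funpow_sector_step_nonneg[OF assms]])
  finally show ?case by simp
qed simp

lemma Dfn_image_cone_subset: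
  assumes "0 \<le> theta lam R1" and "theta lam M + (theta lam R1 - theta lam M) / lam ^ m \<le> theta lam R2"
  shows "Dfn E \<tau> m \<zeta> ` cone lam R1 \<subseteq> cone lam R2"
  using Dfn_image_sector[OF assms(1)] sector_mono[OF assms(2)[folded funpow_sector_step]]
  unfolding cone_eq_sector by blast

lemma Dfn_image_cone_subset_self:
  assumes "M \<le> R"
  shows "Dfn E \<tau> m \<zeta> ` cone lam R \<subseteq> cone lam R"
proof (rule Dfn_image_cone_subset)
  show "0 \<le> theta lam R" using assms M_nonneg by (intro theta_nonneg) simp
  have "0 \<le> theta lam R - theta lam M" unfolding theta_diff using assms lam_gt_1 by simp
  moreover have "1 \<le> lam ^ m" using lam_gt_1 by simp
  ultimately have "(theta lam R - theta lam M) / lam ^ m \<le> theta lam R - theta lam M"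
    by (simp add: divide_le_eq mult_le_cancel_left1 mult_le_cancel_left_pos)
  then show "theta lam M + (theta lam R - theta lam M) / lam ^ m \<le> theta lam R" by simp
qed

text \<open>A preimage of z under f^(n+m) passes through a preimage \<zeta>' of z under f^n, and since
  Df^n(\<zeta>') is invertible the direction at \<zeta>' is determined by v.\<close>

lemma cone_preimages_add_subset:
  assumes cone: "\<And>\<zeta>. Dfn E \<tau> m \<zeta> ` cone lam R1 \<subseteq> cone lam R2"
  shows "cone_preimages R1 (n + m) z v \<subseteq>
    (\<Union>\<zeta>'\<in>cone_preimages R2 n z v. cone_preimages R1 m \<zeta>' (sgn (inv (Dfn E \<tau> n \<zeta>') v)))"
proof
  fix \<zeta> assume "\<zeta> \<in> cone_preimages R1 (n + m) z v"
  then obtain c where \<zeta>: "\<zeta> \<in> torus" "(fT E \<tau> ^^ (n + m)) \<zeta> = z"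
    and c: "c \<in> cone lam R1" "v = Dfn E \<tau> (n + m) \<zeta> c"
    by (auto simp: cone_preimages_def)
  define \<zeta>' w where "\<zeta>' = (fT E \<tau> ^^ m) \<zeta>" and "w = Dfn E \<tau> m \<zeta> c"
  have v: "v = Dfn E \<tau> n \<zeta>' w" using c(2) Dfn_add unfolding \<zeta>'_def w_def by simp
  have "w \<in> cone lam R2" using cone c(1) unfolding w_def by blast
  then have "\<zeta>' \<in> cone_preimages R2 n z v"
    using funpow_fT_in_torus[OF \<zeta>(1)] \<zeta>(2) v
    unfolding cone_preimages_def \<zeta>'_def by (auto simp: funpow_add)
  moreover have "sgn (inv (Dfn E \<tau> n \<zeta>') v) = Dfn E \<tau> m \<zeta> (c /\<^sub>R norm w)"
    unfolding v inv_f_f[OF bij_is_inj[OF bij_Dfn]] by (simp add: sgn_div_norm w_def Dfn_scaleR)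
  then have "\<zeta> \<in> cone_preimages R1 m \<zeta>' (sgn (inv (Dfn E \<tau> n \<zeta>') v))"
    using \<zeta>(1) scaleR_mem_cone[OF c(1)] unfolding cone_preimages_def \<zeta>'_def by auto
  ultimately show "\<zeta> \<in> (\<Union>\<zeta>'\<in>cone_preimages R2 n z v. cone_preimages R1 m \<zeta>' (sgn (inv (Dfn E \<tau> n \<zeta>') v)))"
    by blast
qed

lemma Ncount_add_le:
  assumes cone: "\<And>\<zeta>. Dfn E \<tau> m \<zeta> ` cone lam R1 \<subseteq> cone lam R2"
  shows "Ncount E \<tau> lam R1 (n + m) \<le> Ncount E \<tau> lam R2 n * Ncount E \<tau> lam R1 m"
proof (rule Ncount_leI)
  fix z and v :: "real \<times> real" assume z: "z \<in> torus" and v: "norm v = 1"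
  define Z where "Z = cone_preimages R2 n z v"
  define F where "F \<zeta>' = cone_preimages R1 m \<zeta>' (sgn (inv (Dfn E \<tau> n \<zeta>') v))" for \<zeta>'
  have v0: "v \<noteq> 0" using v by auto
  have Z: "finite Z" unfolding Z_def by (rule finite_cone_preimages[OF z v0])
  have F: "\<zeta>' \<in> torus" "norm (sgn (inv (Dfn E \<tau> n \<zeta>') v)) = 1" "finite (F \<zeta>')"
    if "\<zeta>' \<in> Z" for \<zeta>'
  proof -
    show "\<zeta>' \<in> torus" using that by (simp add: Z_def cone_preimages_def)
    have "Dfn E \<tau> n \<zeta>' 0 = 0" by (simp add: Dfn_eq zero_prod_def)
    then have "inv (Dfn E \<tau> n \<zeta>') v \<noteq> 0"
      using v0 surj_f_inv_f[OF bij_is_surj[OF bij_Dfn], of n \<zeta>' v] by metis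
    then show "norm (sgn (inv (Dfn E \<tau> n \<zeta>') v)) = 1" by (simp add: norm_sgn)
    then show "finite (F \<zeta>')" unfolding F_def by (intro finite_cone_preimages \<open>\<zeta>' \<in> torus\<close>) auto
  qed
  have "card (cone_preimages R1 (n + m) z v) \<le> card (\<Union>\<zeta>'\<in>Z. F \<zeta>')"
    using cone_preimages_add_subset[OF cone] Z F(3) by (intro card_mono) (auto simp: Z_def F_def)
  also have "\<dots> \<le> (\<Sum>\<zeta>'\<in>Z. card (F \<zeta>'))" by (rule card_UN_le[OF Z])
  also have "\<dots> \<le> card Z * Ncount E \<tau> lam R1 m"
    using sum_bounded_above[of Z "\<lambda>\<zeta>'. card (F \<zeta>')"] F card_cone_preimages_le_Ncount
    by (simp add: F_def)
  also have "\<dots> \<le> Ncount E \<tau> lam R2 n * Ncount E \<tau> lam R1 m"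
    unfolding Z_def by (intro mult_right_mono card_cone_preimages_le_Ncount[OF z v]) simp
  finally show "card (cone_preimages R1 (n + m) z v) \<le> Ncount E \<tau> lam R2 n * Ncount E \<tau> lam R1 m" .
qed

lemma words_nonempty: "words l n \<noteq> {}"
proof -
  have "0 \<in> {..<l}" using l_pos by simp
  then show ?thesis by (auto simp: words_def PiE_eq_empty_iff)
qed

lemma Ncount_ge_1:
  assumes "0 \<le> R"
  shows "1 \<le> Ncount E \<tau> lam R n"
proof -
  obtain \<alpha> where \<alpha>: "\<alpha> \<in> words l n" using words_nonempty by blast
  define v where "v = sgn (1::real, S_partial n (xpt E 0 \<alpha> n))"
  have z: "(0, 0) \<in> torus" by (simp add: torus_def circle_def)
  have v: "norm v = 1" by (simp add: v_def sgn_Pair_one)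
  have "\<alpha> \<in> cone_words R n 0 v"
    using \<alpha> sgn_Pair_one(2,3) theta_nonneg[OF assms] dEn_pos
    by (simp add: v_def cone_words_def divide_nonneg_pos)
  then have "1 \<le> card (cone_words R n 0 v)"
    using finite_cone_words by (metis One_nat_def Suc_leI card_gt_0_iff empty_iff)
  also have "\<dots> = card (cone_preimages R n (0, 0) v)"
    using card_cone_preimages[OF z, of v] v by (metis fst_conv norm_zero zero_neq_one)
  also have "\<dots> \<le> Ncount E \<tau> lam R n" by (rule card_cone_preimages_le_Ncount[OF z v])
  finally show ?thesis .
qed

lemma Ntilde_ge_1:
  assumes "0 \<le> Rt"
  shows "1 \<le> Ntilde E \<tau> l ext Rt n"
proof -
  obtain \<alpha> where \<alpha>: "\<alpha> \<in> words l n" using words_nonempty by blast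
  then have "\<alpha> \<in> near_words Rt n ext 0 (Sfun E \<tau> 0 (ext n \<alpha>))"
    using assms dEn_pos by (simp add: near_words_def deriv_funpow_E divide_nonneg_pos)
  then have "1 \<le> card (near_words Rt n ext 0 (Sfun E \<tau> 0 (ext n \<alpha>)))"
    using finite_near_words by (metis One_nat_def Suc_leI card_gt_0_iff empty_iff)
  also have "\<dots> \<le> Ntilde E \<tau> l ext Rt n" by (rule card_near_words_le_Ntilde) (simp add: circle_def)
  finally show ?thesis .
qed

lemma Ntau_eq_1_iff_ln_Ncount:
  assumes "M \<le> R"
  shows "Ntau E \<tau> lam R = 1 \<longleftrightarrow> (\<lambda>n. ln (real (Ncount E \<tau> lam R n)) / real n) \<longlonglongrightarrow> 0"
proof -
  define a where "a n = ln (real (Ncount E \<tau> lam R n))" for n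
  have N_ge_1: "1 \<le> real (Ncount E \<tau> lam R n)" for n
    using Ncount_ge_1 M_nonneg assms by simp
  have a_nonneg: "0 \<le> a n" for n using N_ge_1[of n] by (simp add: a_def)
  have a_subadditive: "a (m + n) \<le> a m + a n" for m n
  proof -
    have "Ncount E \<tau> lam R (n + m) \<le> Ncount E \<tau> lam R n * Ncount E \<tau> lam R m"
      by (rule Ncount_add_le[OF Dfn_image_cone_subset_self[OF assms]])
    then have "real (Ncount E \<tau> lam R (m + n)) \<le> real (Ncount E \<tau> lam R m) * real (Ncount E \<tau> lam R n)"
      by (simp add: add.commute mult.commute flip: of_nat_mult)
    then have "a (m + n) \<le> ln (real (Ncount E \<tau> lam R m) * real (Ncount E \<tau> lam R n))"
      using N_ge_1[of "m + n"] by (simp add: a_def)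
    also have "\<dots> = a m + a n" using N_ge_1[of m] N_ge_1[of n] by (simp add: a_def ln_mult)
    finally show ?thesis .
  qed
  define L where "L = Inf {a n / real n | n. n \<ge> 1}"
  have L: "(\<lambda>n. a n / real n) \<longlonglongrightarrow> L"
    unfolding L_def by (rule Fekete_subadditive[OF a_nonneg a_subadditive])
  have "real (Ncount E \<tau> lam R n) powr (1 / real n) = exp (a n / real n)" for n
    using N_ge_1[of n] by (simp add: a_def powr_def)
  then have "Ntau E \<tau> lam R = exp L"
    unfolding Ntau_def using limI[OF tendsto_exp[OF L]] by simp
  then have "Ntau E \<tau> lam R = 1 \<longleftrightarrow> L = 0" by simp
  also have "\<dots> \<longleftrightarrow> (\<lambda>n. a n / real n) \<longlonglongrightarrow> 0" using L LIMSEQ_unique by blast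
  finally show ?thesis unfolding a_def .
qed

text \<open>R' is chosen with \<vartheta>_R' = \<vartheta>_M + Rt, so that Ntilde_le_Ncount applies to Rt and R';
  Df^m maps K_R' into K_R once m is large.\<close>

lemma Ntilde_shift_le_Ncount:
  assumes ext: "valid_ext l ext" and R: "M < R" and Rt: "0 < Rt"
  obtains m C where "1 \<le> C" "\<And>j. Ntilde E \<tau> l ext Rt (j + m) \<le> Ncount E \<tau> lam R j * C"
proof -
  define R' where "R' = M + Rt * (lam - 1)"
  have theta_R': "theta lam R' = theta lam M + Rt"
    unfolding R'_def theta_def using lam_gt_1 by (simp add: field_simps)
  have R'_nonneg: "0 \<le> R'" unfolding R'_def using M_nonneg Rt lam_gt_1 by simp
  define \<delta> where "\<delta> = theta lam R - theta lam M"
  have \<delta>: "0 < \<delta>" unfolding \<delta>_def theta_diff using R lam_gt_1 by simp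
  obtain m where "Rt / \<delta> < lam ^ m" using real_arch_pow[OF lam_gt_1] by blast
  then have "Rt < \<delta> * lam ^ m" using \<delta> by (simp add: divide_less_eq mult.commute)
  then have "Rt / lam ^ m < \<delta>" using lam_pos by (simp add: divide_less_eq mult.commute)
  then have "theta lam M + (theta lam R' - theta lam M) / lam ^ m \<le> theta lam R"
    by (simp add: theta_R' \<delta>_def)
  then have cone: "Dfn E \<tau> m \<zeta> ` cone lam R' \<subseteq> cone lam R" for \<zeta>
    by (rule Dfn_image_cone_subset[OF theta_nonneg[OF R'_nonneg]])
  have "Ntilde E \<tau> l ext Rt (j + m) \<le> Ncount E \<tau> lam R j * Ncount E \<tau> lam R' m" for j
  proof -
    have "Ntilde E \<tau> l ext Rt (j + m) \<le> Ncount E \<tau> lam R' (j + m)"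
      by (rule Ntilde_le_Ncount[OF ext]) (simp add: theta_R')
    also have "\<dots> \<le> Ncount E \<tau> lam R j * Ncount E \<tau> lam R' m" by (rule Ncount_add_le[OF cone])
    finally show ?thesis .
  qed
  with Ncount_ge_1[OF R'_nonneg] show thesis by (rule that)
qed

lemma Ntau_eq_1_iff_Ntilde:
  assumes ext: "valid_ext l ext" and R: "M < R"
  shows "Ntau E \<tau> lam R = 1 \<longleftrightarrow>
    (\<forall>Rt>0. (\<lambda>n. ln (real (Ntilde E \<tau> l ext Rt n)) / real n) \<longlonglongrightarrow> 0)"
proof
  assume "Ntau E \<tau> lam R = 1"
  then have Ncount_rate: "(\<lambda>n. ln (real (Ncount E \<tau> lam R n)) / real n) \<longlonglongrightarrow> 0"
    using Ntau_eq_1_iff_ln_Ncount R by simp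
  show "\<forall>Rt>0. (\<lambda>n. ln (real (Ntilde E \<tau> l ext Rt n)) / real n) \<longlonglongrightarrow> 0"
  proof (intro allI impI)
    fix Rt :: real assume Rt: "0 < Rt"
    obtain m C where C: "1 \<le> C" and le: "\<And>j. Ntilde E \<tau> l ext Rt (j + m) \<le> Ncount E \<tau> lam R j * C"
      using Ntilde_shift_le_Ncount[OF ext R Rt] by blast
    show "(\<lambda>n. ln (real (Ntilde E \<tau> l ext Rt n)) / real n) \<longlonglongrightarrow> 0"
    proof (rule ln_ratio_tendsto_0_if_le_shift[where m = m and C = "real C"])
      show "1 \<le> real (Ntilde E \<tau> l ext Rt n)" for n using Ntilde_ge_1 Rt by simp
      show "1 \<le> real (Ncount E \<tau> lam R n)" for n using Ncount_ge_1 R M_nonneg by simp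
      show "real (Ntilde E \<tau> l ext Rt (j + m)) \<le> real (Ncount E \<tau> lam R j) * real C" for j
        using le[of j] by (simp flip: of_nat_mult)
    qed (use C Ncount_rate in simp_all)
  qed
next
  assume Ntilde_rate: "\<forall>Rt>0. (\<lambda>n. ln (real (Ntilde E \<tau> l ext Rt n)) / real n) \<longlonglongrightarrow> 0"
  define Rt where "Rt = theta lam R + theta lam M + 1"
  have Rt: "0 < Rt" unfolding Rt_def using R M_nonneg theta_nonneg by (simp add: add_nonneg_pos)
  have "(\<lambda>n. ln (real (Ncount E \<tau> lam R n)) / real n) \<longlonglongrightarrow> 0"
  proof (rule ln_ratio_tendsto_0_if_le_shift[where m = 0 and C = 1])
    show "1 \<le> real (Ncount E \<tau> lam R n)" for n using Ncount_ge_1 R M_nonneg by simp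
    show "1 \<le> real (Ntilde E \<tau> l ext Rt n)" for n using Ntilde_ge_1 Rt by simp
    show "real (Ncount E \<tau> lam R (j + 0)) \<le> real (Ntilde E \<tau> l ext Rt j) * 1" for j
      using Ncount_le_Ntilde[OF ext, of R Rt j] by (simp add: Rt_def)
  qed (use Ntilde_rate Rt in simp_all)
  then show "Ntau E \<tau> lam R = 1" using Ntau_eq_1_iff_ln_Ncount R by simp
qed

end

theorem mainTheorem8:
  fixes E \<tau> :: "real \<Rightarrow> real" and r l :: nat and lam Lam R :: real
    and ext :: "nat \<Rightarrow> (nat \<Rightarrow> nat) \<Rightarrow> (nat \<Rightarrow> nat)"
  assumes "r \<ge> 2" and "l \<ge> 2"
    and "Cr r E" and "\<forall>x. E (x + 1) = E x + real l"
    and "1 < lam" and "\<forall>x. lam \<le> deriv E x \<and> deriv E x \<le> Lam"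
    and "E 0 \<in> \<int>"
    and "Cr r \<tau>" and "\<forall>x. \<tau> (x + 1) = \<tau> x"
    and "R > supnorm_deriv \<tau>"
    and "valid_ext l ext"
  shows "(\<forall>Rt>0. theta lam R - theta lam (supnorm_deriv \<tau>) \<ge> Rt \<longrightarrow>
            (\<forall>n\<ge>1. Ntilde E \<tau> l ext Rt n \<le> Ncount E \<tau> lam R n))
       \<and> (\<forall>Rt. Rt > theta lam R + theta lam (supnorm_deriv \<tau>) \<longrightarrow>
            (\<forall>n\<ge>1. Ncount E \<tau> lam R n \<le> Ntilde E \<tau> l ext Rt n))
       \<and> (Ntau E \<tau> lam R = 1 \<longleftrightarrow>
            (\<forall>Rt>0. (\<lambda>n. ln (real (Ntilde E \<tau> l ext Rt n)) / real n) \<longlonglongrightarrow> 0))"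
proof -
  interpret skew_product E \<tau> l lam
    using assms Cr_has_real_derivative[of r] Cr_continuous_deriv[of r \<tau>] by unfold_locales auto
  show ?thesis
  proof (intro conjI allI impI)
    fix Rt :: real and n :: nat assume "theta lam R - theta lam M \<ge> Rt"
    then show "Ntilde E \<tau> l ext Rt n \<le> Ncount E \<tau> lam R n"
      by (intro Ntilde_le_Ncount[OF assms(11)]) simp
  next
    fix Rt :: real and n :: nat assume "Rt > theta lam R + theta lam M"
    then show "Ncount E \<tau> lam R n \<le> Ntilde E \<tau> l ext Rt n"
      by (intro Ncount_le_Ntilde[OF assms(11)]) simp
  qed (rule Ntau_eq_1_iff_Ntilde[OF assms(11,10)])
qed

end
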